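(* Let $(M,\rho)$ be a complete metric space, let $f:M\to\mathbb{R}\cup\{+\infty\}$ be proper, lower semicontinuous and bounded below, and let $g:M\to\mathbb{R}\cup\{+\infty\}$ be lower semicontinuous. Assume that for every $x\in\operatorname{dom}|\widetilde\nabla f|$ we have $x\in\operatorname{dom} g$ and $|\widetilde\nabla g|(x)\le|\widetilde\nabla f|(x)$. Then for every $\varepsilon>0$, every $x_0\in\operatorname{dom}|\widetilde\nabla f|$ and every $r\in(0,1)$ there exists $x\in\varepsilon\operatorname{Crit} f$ such that $$f(x)\le f(x_0)-\varepsilon\rho(x,x_0)\quad\text{and}\quad f(x_0)-rg(x_0)\ge f(x)-rg(x).$$ Moreover, for every $\varepsilon>0$ and $r\in(0,1)$, $$\inf_{x\in\operatorname{dom} f}(f(x)-rg(x))=\inf_{x\in\varepsilon\operatorname{Crit} f}(f(x)-rg(x)).$$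
   Context: $\operatorname{dom} f:=\{x:f(x)<+\infty\}$; on $\operatorname{dom} f$, $f(x)-rg(x)=-\infty$ if $g(x)=+\infty$. $[t]^+:=\max\{0,t\}$ (with $[f(x)-f(y)]^+:=0$ if $f(y)=+\infty$). For $x\in\operatorname{dom} f$, the global slope is $|\widetilde\nabla f|(x):=\sup_{y\neq x}\frac{[f(x)-f(y)]^+}{\rho(x,y)}\in[0,+\infty]$, and $\operatorname{dom}|\widetilde\nabla f|:=\{x\in\operatorname{dom} f:\ |\widetilde\nabla f|(x)<+\infty\}$. For $\varepsilon\ge0$, $\varepsilon\operatorname{Crit} f:=\{x\in\operatorname{dom} f:\ |\widetilde\nabla f|(x)\le\varepsilon\}$. *)

theory Defs
  imports "HOL-Analysis.Analysis"
begin

text \<open>Extended-real valued functions on a metric space; values in \<real> \<union> {+\<infinity>} are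
  modelled by ereal-valued functions never taking -\<infinity>.\<close>

definition edom :: "('a \<Rightarrow> ereal) \<Rightarrow> 'a set" where
  "edom f = {x. f x < \<infinity>}"

definition lsc :: "('a::topological_space \<Rightarrow> ereal) \<Rightarrow> bool" where
  "lsc f \<longleftrightarrow> (\<forall>x. \<forall>c. c < f x \<longrightarrow> eventually (\<lambda>y. c < f y) (nhds x))"

definition gslope :: "('a::metric_space \<Rightarrow> ereal) \<Rightarrow> 'a \<Rightarrow> ereal" where
  "gslope f x = max 0 (SUP y\<in>{y. y \<noteq> x}.
      (if f y = \<infinity> then 0 else max 0 (f x - f y)) / ereal (dist x y))"

definition dom_gslope :: "('a::metric_space \<Rightarrow> ereal) \<Rightarrow> 'a set" where
  "dom_gslope f = {x \<in> edom f. gslope f x < \<infinity>}"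

definition epsCrit :: "real \<Rightarrow> ('a::metric_space \<Rightarrow> ereal) \<Rightarrow> 'a set" where
  "epsCrit \<epsilon> f = {x \<in> edom f. gslope f x \<le> ereal \<epsilon>}"

end

theory Submission
  imports Defs
begin

text \<open>
  Ekeland's variational principle with parameter \<lambda> turns a point \<open>x\<^sub>0 \<in> dom f\<close> into a point
  \<open>a\<close> with global slope at most \<lambda> and \<open>f a + \<lambda> \<rho>(a, x\<^sub>0) \<le> f x\<^sub>0\<close>. Such a step never increases
  \<open>f - r g\<close> as long as \<open>r |\<nabla>f|(x\<^sub>0) \<le> \<lambda>\<close>: the slope bound \<open>|\<nabla>g|(x\<^sub>0) \<le> |\<nabla>f|(x\<^sub>0)\<close> gives
  \<open>r (g x\<^sub>0 - g a) \<le> r |\<nabla>f|(x\<^sub>0) \<rho>(a, x\<^sub>0) \<le> f x\<^sub>0 - f a\<close>. Starting from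
  \<open>|\<nabla>f|(x\<^sub>0) \<le> \<epsilon> / r\<^sup>n\<close> and taking \<open>\<lambda> = \<epsilon> / r\<^sup>n\<^sup>-\<^sup>1, \<epsilon> / r\<^sup>n\<^sup>-\<^sup>2, \<dots>, \<epsilon>\<close>, after \<open>n\<close> steps one
  reaches an \<open>\<epsilon>\<close>-critical point; the cone inequalities compose by the triangle inequality.
  For the infima, Ekeland points exist arbitrarily close to any point of \<open>dom f\<close>, so lower
  semicontinuity of \<open>g\<close> reduces the general case to points of \<open>dom |\<nabla>f|\<close>.
\<close>

lemma lsc_closed_sublevel:
  fixes f :: "'a::topological_space \<Rightarrow> ereal"
  assumes "lsc f"
  shows "closed {x. f x \<le> c}"
proof -
  have "open {x. c < f x}"
  proof (subst open_subopen, intro ballI)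
    fix x assume "x \<in> {x. c < f x}"
    then have "eventually (\<lambda>y. c < f y) (nhds x)"
      using assms unfolding lsc_def by blast
    then show "\<exists>T. open T \<and> x \<in> T \<and> T \<subseteq> {x. c < f x}"
      unfolding eventually_nhds by blast
  qed
  then show ?thesis
    by (simp add: closed_def Compl_eq not_le)
qed

lemma lsc_add_continuous:
  fixes f :: "'a::topological_space \<Rightarrow> ereal" and h :: "'a \<Rightarrow> real"
  assumes "lsc f" "continuous_on UNIV h"
  shows "lsc (\<lambda>x. f x + ereal (h x))"
  unfolding lsc_def
proof (intro allI impI)
  fix x c assume "c < f x + ereal (h x)"
  then obtain t where t: "c < ereal t" "ereal t < f x + ereal (h x)"
    using ereal_dense2 by blast
  then have "ereal (t - h x) < f x"
    by (cases "f x") auto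
  then obtain u where u: "t - h x < u" "ereal u < f x"
    using ereal_dense2 by force
  have "eventually (\<lambda>y. ereal u < f y) (nhds x)"
    using assms(1) u(2) unfolding lsc_def by blast
  moreover have "(h \<longlongrightarrow> h x) (nhds x)"
    using assms(2) by (simp add: continuous_on_def tendsto_at_iff_tendsto_nhds[symmetric])
  then have "eventually (\<lambda>y. t - u < h y) (nhds x)"
    using u(1) by (intro order_tendstoD(1)) auto
  ultimately show "eventually (\<lambda>y. c < f y + ereal (h y)) (nhds x)"
  proof eventually_elim
    case (elim y)
    then have "ereal t < f y + ereal (h y)"
      by (cases "f y") auto
    with t(1) show ?case
      by (rule less_trans)
  qed
qed

lemma exists_descent_point_small_set:
  fixes S :: "'a::metric_space \<Rightarrow> 'a set" and F :: "'a \<Rightarrow> real"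
  assumes x: "x \<in> D"
    and self: "\<And>x. x \<in> D \<Longrightarrow> x \<in> S x"
    and trans: "\<And>x y. x \<in> D \<Longrightarrow> y \<in> S x \<Longrightarrow> y \<in> D \<and> S y \<subseteq> S x"
    and descent: "\<And>x y. x \<in> D \<Longrightarrow> y \<in> S x \<Longrightarrow> F y + dist x y \<le> F x"
    and bdd: "bdd_below (F ` D)"
    and e: "0 < e"
  shows "\<exists>y\<in>S x. y \<in> D \<and> (\<forall>z\<in>S y. dist y z \<le> e)"
proof -
  let ?m = "Inf (F ` S x)"
  have S_D: "S x \<subseteq> D"
    using trans x by blast
  have "bdd_below (F ` S x)"
    using bdd S_D by (meson bdd_below_mono image_mono)
  then have m_le: "?m \<le> F z" if "z \<in> S x" for z
    using that by (simp add: cInf_lower)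
  \<comment> \<open>an almost minimiser of \<open>F\<close> on \<open>S x\<close> leaves no room for further descent\<close>
  obtain y where y: "y \<in> S x" "F y < ?m + e"
    using cInf_lessD[of "F ` S x" "?m + e"] self[OF x] e by force
  have "dist y z \<le> e" if "z \<in> S y" for z
  proof -
    have "z \<in> S x"
      using trans[OF x y(1)] that by blast
    then show ?thesis
      using descent[of y z] m_le[of z] y S_D that by force
  qed
  then show ?thesis
    using y S_D by blast
qed

lemma exists_terminal_descent_point:
  fixes S :: "'a::complete_space \<Rightarrow> 'a set" and F :: "'a \<Rightarrow> real"
  assumes x0: "x0 \<in> D"
    and closed: "\<And>x. x \<in> D \<Longrightarrow> closed (S x)"
    and self: "\<And>x. x \<in> D \<Longrightarrow> x \<in> S x"
    and trans: "\<And>x y. x \<in> D \<Longrightarrow> y \<in> S x \<Longrightarrow> y \<in> D \<and> S y \<subseteq> S x"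
    and descent: "\<And>x y. x \<in> D \<Longrightarrow> y \<in> S x \<Longrightarrow> F y + dist x y \<le> F x"
    and bdd: "bdd_below (F ` D)"
  shows "\<exists>a\<in>S x0. S a = {a}"
proof -
  have "\<exists>X. \<forall>n. (X n \<in> D \<and> (n = 0 \<longrightarrow> X n = x0)) \<and>
      X (Suc n) \<in> S (X n) \<and> (\<forall>z\<in>S (X (Suc n)). dist (X (Suc n)) z \<le> 1 / real (Suc n))"
  proof (rule dependent_nat_choice)
    fix x and n :: nat assume "x \<in> D \<and> (n = 0 \<longrightarrow> x = x0)"
    then show "\<exists>y. (y \<in> D \<and> (Suc n = 0 \<longrightarrow> y = x0)) \<and> y \<in> S x \<and> (\<forall>z\<in>S y. dist y z \<le> 1 / real (Suc n))"
      using exists_descent_point_small_set[of x D S F "1 / real (Suc n)"] self trans descent bdd by auto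
  qed (use x0 in blast)
  then obtain X where X_D: "\<And>n. X n \<in> D" and X0: "X 0 = x0" and X_step: "\<And>n. X (Suc n) \<in> S (X n)"
    and X_small: "\<And>n z. z \<in> S (X (Suc n)) \<Longrightarrow> dist (X (Suc n)) z \<le> 1 / real (Suc n)"
    by blast
  have decseq: "S (X n) \<subseteq> S (X m)" if "m \<le> n" for m n
    using lift_Suc_antimono_le[of "\<lambda>n. S (X n)"] trans X_D X_step that by blast
  have "\<exists>a. \<Inter>(range (\<lambda>n. S (X n))) = {a}"
  proof (rule decreasing_closed_nest_sing)
    fix e :: real assume "0 < e"
    then obtain n where n: "inverse (Suc n) < e / 2"
      using reals_Archimedean[of "e / 2"] by auto
    have "dist y z < e" if "y \<in> S (X (Suc n))" "z \<in> S (X (Suc n))" for y z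
      using dist_triangle3[of y z "X (Suc n)"] X_small[OF that(1)] X_small[OF that(2)] n
      by (simp add: inverse_eq_divide)
    then show "\<exists>n. \<forall>y\<in>S (X n). \<forall>z\<in>S (X n). dist y z < e"
      by blast
  qed (use closed self X_D decseq in blast)+
  then obtain a where a: "\<Inter>(range (\<lambda>n. S (X n))) = {a}"
    by blast
  then have a_S0: "a \<in> S x0"
    using X0 by blast
  have "S a \<subseteq> {a}"
  proof
    fix y assume "y \<in> S a"
    then have "y \<in> S (X n)" for n
      using trans[OF X_D, of a n] a by blast
    then show "y \<in> {a}"
      using a by blast
  qed
  moreover have "a \<in> S a"
    using self trans x0 a_S0 by blast
  ultimately show ?thesis
    using a_S0 by blast
qed

lemma dist_descent_trans:
  fixes f :: "'a::metric_space \<Rightarrow> ereal"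
  assumes zy: "f z + ereal (\<alpha> * dist z y) \<le> f y" and yx: "f y + ereal (\<beta> * dist y x) \<le> f x"
    and "0 \<le> \<alpha>" "\<alpha> \<le> \<beta>"
  shows "f z + ereal (\<alpha> * dist z x) \<le> f x"
proof -
  have "\<alpha> * dist z x \<le> \<alpha> * (dist z y + dist y x)"
    using dist_triangle[of z x y] assms(3) by (rule mult_left_mono)
  also have "\<dots> \<le> \<alpha> * dist z y + \<beta> * dist y x"
    using mult_right_mono[OF assms(4) zero_le_dist[of y x]] by (simp add: distrib_left)
  finally have "\<alpha> * dist z x \<le> \<alpha> * dist z y + \<beta> * dist y x" .
  then have "f z + ereal (\<alpha> * dist z x) \<le> (f z + ereal (\<alpha> * dist z y)) + ereal (\<beta> * dist y x)"
    by (simp add: add.assoc add_left_mono)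
  also have "\<dots> \<le> f x"
    using zy yx by (meson add_right_mono order_trans)
  finally show ?thesis .
qed

theorem ekeland_variational_principle:
  fixes f :: "'a::complete_space \<Rightarrow> ereal"
  assumes not_minf: "\<And>x. f x \<noteq> -\<infinity>" and "lsc f" and bdd: "\<And>x. ereal c \<le> f x"
    and x0: "x0 \<in> edom f" and lam: "0 < lam"
  shows "\<exists>a. f a + ereal (lam * dist a x0) \<le> f x0 \<and>
    (\<forall>y. y \<noteq> a \<longrightarrow> f a < f y + ereal (lam * dist a y))"
proof -
  define S where "S x = {y. f y + ereal (lam * dist y x) \<le> f x}" for x
  define F where "F x = real_of_ereal (f x) / lam" for x
  have real_f: "f x = ereal (lam * F x)" if "x \<in> edom f" for x
    using that not_minf[of x] lam by (cases "f x") (auto simp: edom_def F_def)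
  have closed: "closed (S x)" if "x \<in> edom f" for x
    unfolding S_def real_f[OF that]
    by (intro lsc_closed_sublevel lsc_add_continuous \<open>lsc f\<close> continuous_intros)
  have self: "x \<in> S x" for x
    by (simp add: S_def)
  have trans: "y \<in> edom f \<and> S y \<subseteq> S x" if "x \<in> edom f" "y \<in> S x" for x y
  proof
    have "f y \<le> f y + ereal (lam * dist y x)"
      using lam by (intro add_increasing2) auto
    also have "\<dots> \<le> f x"
      using \<open>y \<in> S x\<close> by (simp add: S_def)
    finally show "y \<in> edom f"
      using that(1) by (auto simp: edom_def)
    show "S y \<subseteq> S x"
    proof
      fix z assume "z \<in> S y"
      then show "z \<in> S x"
        using dist_descent_trans[of f z lam y lam x] \<open>y \<in> S x\<close> lam by (simp add: S_def)
    qed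
  qed
  have descent: "F y + dist x y \<le> F x" if "x \<in> edom f" "y \<in> S x" for x y
    using that trans[OF that] real_f[of x] real_f[of y] lam
    by (simp add: S_def dist_commute distrib_left[symmetric])
  have "bdd_below (F ` edom f)"
  proof (intro bdd_belowI2)
    fix x assume "x \<in> edom f"
    then show "c / lam \<le> F x"
      using bdd[of x] real_f[of x] lam by (simp add: divide_le_eq mult.commute)
  qed
  then obtain a where a: "a \<in> S x0" "S a = {a}"
    using exists_terminal_descent_point[of x0 "edom f" S F] x0 closed self trans descent by blast
  have "f a < f y + ereal (lam * dist a y)" if "y \<noteq> a" for y
  proof -
    have "y \<notin> S a"
      using that a(2) by blast
    then show ?thesis
      by (simp add: S_def not_le dist_commute)
  qed
  with a(1) show ?thesis
    unfolding S_def by blast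
qed

lemma slope_quotient_le_iff:
  fixes f :: "'a::metric_space \<Rightarrow> ereal"
  assumes fx: "f x = ereal A" and "x \<noteq> y" and "0 \<le> s"
  shows "(if f y = \<infinity> then 0 else max 0 (f x - f y)) / ereal (dist x y) \<le> ereal s
    \<longleftrightarrow> f x \<le> f y + ereal (s * dist x y)"
proof -
  have d: "0 < dist x y"
    using \<open>x \<noteq> y\<close> by simp
  show ?thesis
  proof (cases "f y")
    case (real v)
    have "max 0 (f x - f y) / ereal (dist x y) = ereal (max 0 (A - v) / dist x y)"
      using fx real d by (cases "0 \<le> A - v") (auto simp: max_def)
    then show ?thesis
      using fx real d \<open>0 \<le> s\<close> by (auto simp: pos_divide_le_eq)
  qed (use fx d \<open>0 \<le> s\<close> in auto)
qed

lemma gslope_nonneg: "0 \<le> gslope f x"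
  by (simp add: gslope_def)

lemma gslope_le_iff:
  fixes f :: "'a::metric_space \<Rightarrow> ereal"
  assumes fx: "f x = ereal A" and "0 \<le> s"
  shows "gslope f x \<le> ereal s \<longleftrightarrow> (\<forall>y. f x \<le> f y + ereal (s * dist x y))"
proof -
  have "gslope f x \<le> ereal s \<longleftrightarrow> (\<forall>y. y \<noteq> x \<longrightarrow> f x \<le> f y + ereal (s * dist x y))"
    using slope_quotient_le_iff[of f x A _ s, OF fx _ \<open>0 \<le> s\<close>] \<open>0 \<le> s\<close> by (simp add: gslope_def SUP_le_iff)
  moreover have "f x \<le> f x + ereal (s * dist x x)"
    by simp
  ultimately show ?thesis
    by metis
qed

lemma ereal_le_minus_mult_by_approx:
  fixes A r :: real and y I :: ereal
  assumes "0 < r" "y \<noteq> -\<infinity>" and approx: "\<And>t. ereal t < y \<Longrightarrow> I \<le> ereal (A - r * t)"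
  shows "I \<le> ereal A - ereal r * y"
proof (cases y)
  case (real G)
  show ?thesis
  proof (rule ereal_le_epsilon2)
    fix e :: real assume "0 < e"
    then have "I \<le> ereal (A - r * (G - e / r))"
      using approx[of "G - e / r"] real \<open>0 < r\<close> by simp
    then show "I \<le> ereal A - ereal r * y + ereal e"
      using real \<open>0 < r\<close> by (simp add: algebra_simps)
  qed
next
  case PInf
  have "I \<le> ereal B" for B
    using approx[of "(A - B) / r"] PInf \<open>0 < r\<close> by simp
  then show ?thesis
    using PInf \<open>0 < r\<close> ereal_bot by fastforce
qed (use assms(2) in simp)

lemma dom_gslope_edom: "x \<in> dom_gslope f \<Longrightarrow> x \<in> edom f"
  by (simp add: dom_gslope_def)

lemma dom_gslopeI: "x \<in> edom f \<Longrightarrow> gslope f x \<le> ereal s \<Longrightarrow> x \<in> dom_gslope f"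
  by (auto simp: dom_gslope_def)

locale slope_dominated =
  fixes f g :: "'a::complete_space \<Rightarrow> ereal"
  assumes f_not_minf: "\<And>x. f x \<noteq> -\<infinity>" and f_lsc: "lsc f" and f_bdd: "\<exists>c. \<forall>x. ereal c \<le> f x"
    and g_not_minf: "\<And>x. g x \<noteq> -\<infinity>" and g_lsc: "lsc g"
    and g_slope_le: "\<And>x. x \<in> dom_gslope f \<Longrightarrow> x \<in> edom g \<and> gslope g x \<le> gslope f x"
begin

lemma f_realE:
  assumes "x \<in> edom f"
  obtains v where "f x = ereal v"
  using assms f_not_minf[of x] by (cases "f x") (auto simp: edom_def)

lemma g_realE:
  assumes "x \<in> dom_gslope f"
  obtains v where "g x = ereal v"
  using g_slope_le[OF assms] g_not_minf[of x] by (cases "g x") (auto simp: edom_def)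

lemma ekeland_point:
  assumes "x0 \<in> edom f" "0 < lam"
  obtains a where "a \<in> dom_gslope f" "gslope f a \<le> ereal lam" "f a + ereal (lam * dist a x0) \<le> f x0"
proof -
  obtain c where "\<And>x. ereal c \<le> f x"
    using f_bdd by blast
  then obtain a where a: "f a + ereal (lam * dist a x0) \<le> f x0"
    and min: "\<And>y. y \<noteq> a \<Longrightarrow> f a < f y + ereal (lam * dist a y)"
    using ekeland_variational_principle[OF f_not_minf f_lsc _ assms] by blast
  have "f a \<le> f a + ereal (lam * dist a x0)"
    using \<open>0 < lam\<close> by (intro add_increasing2) auto
  with a assms(1) have "a \<in> edom f"
    by (auto simp: edom_def)
  then obtain A where A: "f a = ereal A"
    by (rule f_realE)
  have "f a \<le> f y + ereal (lam * dist a y)" for y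
    using min[of y] by (cases "y = a") auto
  then have "gslope f a \<le> ereal lam"
    using gslope_le_iff[of f a A, OF A] \<open>0 < lam\<close> by simp
  moreover have "a \<in> dom_gslope f"
    using \<open>a \<in> edom f\<close> \<open>gslope f a \<le> ereal lam\<close> by (rule dom_gslopeI)
  ultimately show ?thesis
    using that a by blast
qed

lemma g_slope_bound:
  assumes "x \<in> edom f" "gslope f x \<le> ereal s" "0 \<le> s"
  shows "g x \<le> g y + ereal (s * dist x y)"
proof -
  have x: "x \<in> dom_gslope f"
    using assms(1,2) by (rule dom_gslopeI)
  obtain G where G: "g x = ereal G"
    using x by (rule g_realE)
  have "gslope g x \<le> ereal s"
    using g_slope_le[OF x] assms(2) by (blast intro: order_trans)
  then show ?thesis
    using gslope_le_iff[of g x G, OF G \<open>0 \<le> s\<close>] by blast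
qed

lemma ekeland_step_decreases:
  assumes x0: "x0 \<in> edom f" "gslope f x0 \<le> ereal (lam / r)" and "0 < r" "0 \<le> lam"
    and a: "a \<in> dom_gslope f" "f a + ereal (lam * dist a x0) \<le> f x0"
  shows "f a - ereal r * g a \<le> f x0 - ereal r * g x0"
proof -
  have g_le: "g x0 \<le> g a + ereal (lam / r * dist x0 a)"
    using g_slope_bound[OF x0] \<open>0 < r\<close> \<open>0 \<le> lam\<close> by simp
  obtain F0 where F0: "f x0 = ereal F0"
    using x0(1) by (rule f_realE)
  obtain G0 where G0: "g x0 = ereal G0"
    using dom_gslopeI[OF x0] by (rule g_realE)
  obtain A where A: "f a = ereal A"
    using dom_gslope_edom[OF a(1)] by (rule f_realE)
  obtain Ga where Ga: "g a = ereal Ga"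
    using a(1) by (rule g_realE)
  have "G0 \<le> Ga + lam / r * dist a x0"
    using g_le G0 Ga by (simp add: dist_commute)
  then have "r * G0 \<le> r * Ga + lam * dist a x0"
    using \<open>0 < r\<close> by (simp add: field_simps)
  moreover have "A + lam * dist a x0 \<le> F0"
    using a(2) A F0 by simp
  ultimately have "A - r * Ga \<le> F0 - r * G0"
    by linarith
  then show ?thesis
    using A F0 G0 Ga by simp
qed

lemma descent_to_epsCrit:
  assumes "0 < \<epsilon>" "0 < r" "r < 1" and "x0 \<in> edom f" "gslope f x0 \<le> ereal (\<epsilon> / r ^ n)"
  shows "\<exists>x\<in>epsCrit \<epsilon> f. f x + ereal (\<epsilon> * dist x x0) \<le> f x0 \<and>
    f x - ereal r * g x \<le> f x0 - ereal r * g x0"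
  using assms(4,5)
proof (induction n arbitrary: x0)
  case 0
  then have "x0 \<in> epsCrit \<epsilon> f"
    by (simp add: epsCrit_def)
  then show ?case
    by force
next
  case (Suc n)
  define lam where "lam = \<epsilon> / r ^ n"
  have "0 < lam"
    using assms(1,2) by (simp add: lam_def)
  have "\<epsilon> \<le> lam"
    using assms(1-3) by (simp add: lam_def le_divide_eq power_le_one)
  obtain a where a: "a \<in> dom_gslope f" "gslope f a \<le> ereal lam" "f a + ereal (lam * dist a x0) \<le> f x0"
    using ekeland_point[OF Suc.prems(1) \<open>0 < lam\<close>] by blast
  obtain x where x: "x \<in> epsCrit \<epsilon> f" "f x + ereal (\<epsilon> * dist x a) \<le> f a"
    "f x - ereal r * g x \<le> f a - ereal r * g a"
    using Suc.IH[OF dom_gslope_edom[OF a(1)]] a(2) unfolding lam_def by blast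
  have "f x + ereal (\<epsilon> * dist x x0) \<le> f x0"
    using dist_descent_trans[OF x(2) a(3)] assms(1) \<open>\<epsilon> \<le> lam\<close> by simp
  moreover have "f a - ereal r * g a \<le> f x0 - ereal r * g x0"
    using ekeland_step_decreases[OF Suc.prems(1) _ assms(2) _ a(1,3)] Suc.prems(2) \<open>0 < lam\<close> assms(2)
    by (simp add: lam_def mult.commute)
  ultimately show ?case
    using x by (blast intro: order_trans)
qed

lemma exists_epsCrit_below:
  assumes "0 < \<epsilon>" "0 < r" "r < 1" and x0: "x0 \<in> dom_gslope f"
  shows "\<exists>x\<in>epsCrit \<epsilon> f. f x \<le> f x0 - ereal (\<epsilon> * dist x x0) \<and>
    f x - ereal r * g x \<le> f x0 - ereal r * g x0"
proof -
  obtain s where s: "gslope f x0 = ereal s" "0 \<le> s"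
    using x0 gslope_nonneg[of f x0] by (cases "gslope f x0") (auto simp: dom_gslope_def)
  obtain n where n: "r ^ n < \<epsilon> / (s + 1)"
    using real_arch_pow_inv[of "\<epsilon> / (s + 1)" r] assms(1-3) s(2) by auto
  have "s * r ^ n + r ^ n < \<epsilon>"
    using n s(2) by (simp add: less_divide_eq distrib_right mult.commute)
  then have "s * r ^ n \<le> \<epsilon>"
    using zero_less_power[OF assms(2), of n] by linarith
  then have "gslope f x0 \<le> ereal (\<epsilon> / r ^ n)"
    using s assms(2) by (simp add: le_divide_eq)
  then show ?thesis
    using descent_to_epsCrit[OF assms(1-3) dom_gslope_edom[OF x0]] by (simp add: ereal_le_minus)
qed

lemma dom_gslope_near:
  assumes x0: "x0 \<in> edom f" and "0 < \<delta>"
  obtains a where "a \<in> dom_gslope f" "dist a x0 < \<delta>" "f a \<le> f x0"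
proof -
  obtain c where c: "\<And>x. ereal c \<le> f x"
    using f_bdd by blast
  obtain F0 where F0: "f x0 = ereal F0"
    using x0 by (rule f_realE)
  \<comment> \<open>large enough that \<open>lam * dist a x0 \<le> F0 - c\<close> forces \<open>dist a x0 < \<delta>\<close>\<close>
  define lam where "lam = (F0 - c + 1) / \<delta>"
  have "0 < lam"
    using c[of x0] F0 \<open>0 < \<delta>\<close> by (simp add: lam_def)
  obtain a where a: "a \<in> dom_gslope f" "f a + ereal (lam * dist a x0) \<le> f x0"
    using ekeland_point[OF x0 \<open>0 < lam\<close>] by blast
  obtain A where A: "f a = ereal A"
    using dom_gslope_edom[OF a(1)] by (rule f_realE)
  have descent: "A + lam * dist a x0 \<le> F0"
    using a(2) A F0 by simp
  then have "lam * dist a x0 < lam * \<delta>"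
    using c[of a] A \<open>0 < \<delta>\<close> by (simp add: lam_def)
  then have "dist a x0 < \<delta>"
    using \<open>0 < lam\<close> by simp
  moreover have "0 \<le> lam * dist a x0"
    using \<open>0 < lam\<close> by simp
  with descent have "A \<le> F0"
    by linarith
  ultimately show ?thesis
    using that a(1) A F0 by simp
qed

lemma INF_epsCrit_le:
  assumes "0 < \<epsilon>" "0 < r" "r < 1" and x0: "x0 \<in> edom f"
  shows "(INF x\<in>epsCrit \<epsilon> f. f x - ereal r * g x) \<le> f x0 - ereal r * g x0"
proof -
  obtain F0 where F0: "f x0 = ereal F0"
    using x0 by (rule f_realE)
  have "(INF x\<in>epsCrit \<epsilon> f. f x - ereal r * g x) \<le> ereal (F0 - r * t)" if "ereal t < g x0" for t
  proof -
    have "eventually (\<lambda>y. ereal t < g y) (nhds x0)"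
      using g_lsc that unfolding lsc_def by blast
    then obtain \<delta> where "0 < \<delta>" and \<delta>: "\<And>y. dist y x0 < \<delta> \<Longrightarrow> ereal t < g y"
      unfolding eventually_nhds_metric by blast
    obtain a where a: "a \<in> dom_gslope f" "dist a x0 < \<delta>" "f a \<le> f x0"
      using dom_gslope_near[OF x0 \<open>0 < \<delta>\<close>] by blast
    obtain A where "f a = ereal A"
      using dom_gslope_edom[OF a(1)] by (rule f_realE)
    moreover obtain Ga where "g a = ereal Ga"
      using a(1) by (rule g_realE)
    ultimately have fg_a: "f a - ereal r * g a \<le> ereal (F0 - r * t)"
      using a(3) \<delta>[OF a(2)] F0 \<open>0 < r\<close> by (simp add: mult_left_mono diff_mono)
    obtain x where "x \<in> epsCrit \<epsilon> f" "f x - ereal r * g x \<le> f a - ereal r * g a"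
      using exists_epsCrit_below[OF assms(1-3) a(1)] by blast
    then show ?thesis
      by (meson INF_lower fg_a order_trans)
  qed
  then show ?thesis
    using ereal_le_minus_mult_by_approx[OF \<open>0 < r\<close> g_not_minf] F0 by simp
qed

lemma INF_edom_eq_INF_epsCrit:
  assumes "0 < \<epsilon>" "0 < r" "r < 1"
  shows "(INF x\<in>edom f. f x - ereal r * g x) = (INF x\<in>epsCrit \<epsilon> f. f x - ereal r * g x)"
proof (rule antisym)
  show "(INF x\<in>edom f. f x - ereal r * g x) \<le> (INF x\<in>epsCrit \<epsilon> f. f x - ereal r * g x)"
    by (rule INF_superset_mono) (auto simp: epsCrit_def)
  show "(INF x\<in>epsCrit \<epsilon> f. f x - ereal r * g x) \<le> (INF x\<in>edom f. f x - ereal r * g x)"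
    using INF_epsCrit_le[OF assms] by (rule INF_greatest)
qed

end

theorem theorem3p8:
  fixes f g :: "'a::complete_space \<Rightarrow> ereal"
  assumes f_not_minf: "\<And>x. f x \<noteq> -\<infinity>"
      and f_proper: "edom f \<noteq> {}"
      and f_lsc: "lsc f"
      and f_bdd: "\<exists>c::real. \<forall>x. ereal c \<le> f x"
      and g_not_minf: "\<And>x. g x \<noteq> -\<infinity>"
      and g_lsc: "lsc g"
      and fg: "\<And>x. x \<in> dom_gslope f \<Longrightarrow> x \<in> edom g \<and> gslope g x \<le> gslope f x"
  shows "(\<forall>\<epsilon>>0. \<forall>x0\<in>dom_gslope f. \<forall>r. 0 < r \<and> r < 1 \<longrightarrow>
            (\<exists>x\<in>epsCrit \<epsilon> f. f x \<le> f x0 - ereal (\<epsilon> * dist x x0) \<and>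
                f x - ereal r * g x \<le> f x0 - ereal r * g x0))
       \<and> (\<forall>\<epsilon>>0. \<forall>r. 0 < r \<and> r < 1 \<longrightarrow>
            (INF x\<in>edom f. f x - ereal r * g x) = (INF x\<in>epsCrit \<epsilon> f. f x - ereal r * g x))"
proof -
  interpret slope_dominated f g
    using assms by unfold_locales auto
  show ?thesis
    by (simp add: exists_epsCrit_below INF_edom_eq_INF_epsCrit)
qed

end
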